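(* Let $n=2k$ be an even positive integer and $m$ a positive divisor of $n$. Let $u_1,\ldots,u_\tau\in\mathbb{F}_{2^n}$ be pairwise distinct, where $1\le\tau\le k$, and let $F(X_1,\ldots,X_\tau)$ be a reduced polynomial in $\mathbb{F}_2[X_1,\ldots,X_\tau]$. Let $G:\mathbb{F}_{2^n}\to\mathbb{F}_{2^m}$ be a vectorial bent function such that for every $\lambda\in\mathbb{F}_{2^m}^*$ with $\mathrm{Tr}^m_1(\lambda)=1$, the dual $G_\lambda^*$ of the component $G_\lambda$ satisfies $D_{u_i}D_{u_j}G_\lambda^*=0$ for all $1\le i<j\le\tau$. Then $H(x)=G(x)+F(\mathrm{Tr}^n_1(u_1x),\ldots,\mathrm{Tr}^n_1(u_\tau x))$ is a vectorial bent $(n,m)$-function.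
   Context: $\mathrm{Tr}^m_1(x)=\sum_{i=0}^{m-1}x^{2^i}$. For $\lambda\in\mathbb{F}_{2^m}^*$, $G_\lambda(x)=\mathrm{Tr}^m_1(\lambda G(x))$. For a Boolean function $f$ on $\mathbb{F}_{2^n}$, $W_f(a)=\sum_x(-1)^{f(x)+\mathrm{Tr}^n_1(ax)}$; $f$ is bent if $|W_f(a)|=2^{n/2}$ for all $a$, with dual $f^*$ given by $W_f(a)=2^{n/2}(-1)^{f^*(a)}$. $G$ is vectorial bent if every $G_\lambda$, $\lambda\ne0$, is bent. $D_aD_bf(x)=f(x)+f(x+a)+f(x+b)+f(x+a+b)$. A reduced polynomial is a multilinear polynomial $\sum_{I}a_I\prod_{i\in I}X_i$ over $\mathbb{F}_2$. The value of $F(\cdots)$ lies in $\mathbb{F}_2\subseteq\mathbb{F}_{2^m}$. *)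

theory Defs
  imports Main
begin

text \<open>The field F_{2^n} is modelled by a finite field type 'a with CARD('a) = 2^n.
  The subfield F_{2^m} (m dvd n) is the set of fixed points of x \<mapsto> x^(2^m).
  F_2 = {0,1} inside 'a; Boolean functions are 'a-valued functions with values in {0,1}.\<close>

definition tr :: "nat \<Rightarrow> 'a::field \<Rightarrow> 'a" where
  "tr k x = (\<Sum>i<k. x ^ (2 ^ i))"

definition subfield2 :: "nat \<Rightarrow> 'a::field set" where
  "subfield2 m = {x. x ^ (2 ^ m) = x}"

definition walsh :: "nat \<Rightarrow> ('a::{field,finite} \<Rightarrow> 'a) \<Rightarrow> 'a \<Rightarrow> int" where
  "walsh n f a = (\<Sum>x\<in>UNIV. (if f x + tr n (a * x) = 0 then 1 else -1))"

definition bool_fun :: "('a::field \<Rightarrow> 'a) \<Rightarrow> bool" where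
  "bool_fun f \<longleftrightarrow> (\<forall>x. f x \<in> {0, 1})"

definition bent :: "nat \<Rightarrow> ('a::{field,finite} \<Rightarrow> 'a) \<Rightarrow> bool" where
  "bent n f \<longleftrightarrow> bool_fun f \<and> (\<forall>a. \<bar>walsh n f a\<bar> = 2 ^ (n div 2))"

definition dual :: "nat \<Rightarrow> ('a::{field,finite} \<Rightarrow> 'a) \<Rightarrow> 'a \<Rightarrow> 'a" where
  "dual n f a = (if walsh n f a = 2 ^ (n div 2) then 0 else 1)"

definition component :: "nat \<Rightarrow> ('a::field \<Rightarrow> 'a) \<Rightarrow> 'a \<Rightarrow> 'a \<Rightarrow> 'a" where
  "component m G l x = tr m (l * G x)"

definition vectorial_bent :: "nat \<Rightarrow> nat \<Rightarrow> ('a::{field,finite} \<Rightarrow> 'a) \<Rightarrow> bool" where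
  "vectorial_bent n m G \<longleftrightarrow> (\<forall>x. G x \<in> subfield2 m) \<and>
     (\<forall>l\<in>subfield2 m - {0}. bent n (component m G l))"

definition second_deriv :: "('a::field \<Rightarrow> 'a) \<Rightarrow> 'a \<Rightarrow> 'a \<Rightarrow> 'a \<Rightarrow> 'a" where
  "second_deriv f a b x = f x + f (x + a) + f (x + b) + f (x + a + b)"

text \<open>Reduced polynomial in X_1..X_tau over F_2, given by its coefficients c I \<in> {0,1}
  for I \<subseteq> {1..tau}; evaluation sum_I c_I prod_{i in I} y_i.\<close>
definition reduced_poly :: "nat \<Rightarrow> (nat set \<Rightarrow> 'a::field) \<Rightarrow> bool" where
  "reduced_poly \<tau> c \<longleftrightarrow> (\<forall>I. c I \<in> {0, 1}) \<and> (\<forall>I. \<not> I \<subseteq> {1..\<tau>} \<longrightarrow> c I = 0)"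

definition eval_reduced :: "nat \<Rightarrow> (nat set \<Rightarrow> 'a::field) \<Rightarrow> (nat \<Rightarrow> 'a) \<Rightarrow> 'a" where
  "eval_reduced \<tau> c y = (\<Sum>I\<in>Pow {1..\<tau>}. c I * (\<Prod>i\<in>I. y i))"

end

theory Submission
  imports Defs "HOL-Computational_Algebra.Primes"
begin

text \<open>
  Components G_l with Tr(l) = 0 are not changed by adding the F_2-valued function F(...).
  For Tr(l) = 1 write g = G_l and g* for its dual. The vanishing of D_{u_i} D_{u_j} g* makes
  g* affine on every coset a + span{u_1, ..., u_tau}:
  g*(a + sum_{i in S} u_i) = g*(a) + sum_{i in S} delta_i with delta_i = g*(a + u_i) + g*(a).
  Fourier inversion on the cube F_2^tau writes (-1)^F(y) as a combination of the characters
  (-1)^(sum_{i in S} y_i); at y_i = Tr(u_i x) these become the linear characters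
  (-1)^Tr((sum_{i in S} u_i) x). So the Walsh transform of g + F(Tr(u_1 x), ...) at a is the
  same combination of the values
  W_g(a + sum_{i in S} u_i) = 2^(n/2) (-1)^(g*(a) + sum_{i in S} delta_i),
  and inverting the expansion once more gives 2^(n/2) (-1)^(g*(a) + F(delta)).
\<close>

lemma add_self_CHAR_2:
  assumes "CHAR('a::ring_1) = 2"
  shows "x + x = (0::'a)"
  using minus_CHAR_2[OF assms, of x x] by simp

lemma add_eq_0_iff_eq_CHAR_2:
  assumes "CHAR('a::ring_1) = 2"
  shows "x + y = (0::'a) \<longleftrightarrow> x = y"
  by (metis add_eq_0_iff2 uminus_CHAR_2[OF assms])

lemma add_in_zero_one:
  assumes "CHAR('a::ring_1) = 2" and "v \<in> {0, 1}" and "w \<in> {0, 1}"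
  shows "v + w \<in> {0, 1 :: 'a}"
  using assms add_self_CHAR_2[OF assms(1), of 1] by auto

lemma sum_in_zero_one:
  assumes "CHAR('a::ring_1) = 2" and "\<forall>i\<in>A. f i \<in> {0, 1}"
  shows "(\<Sum>i\<in>A. f i :: 'a) \<in> {0, 1}"
  using assms(2)
proof (induction A rule: infinite_finite_induct)
  case (insert i A)
  then have "f i \<in> {0, 1}" "sum f A \<in> {0, 1}"
    by simp_all
  then show ?case
    unfolding sum.insert[OF insert(1,2)] by (rule add_in_zero_one[OF assms(1)])
qed simp_all

lemma prod_in_zero_one:
  assumes "\<forall>i\<in>A. f i \<in> {0, 1}"
  shows "(\<Prod>i\<in>A. f i :: 'a::comm_semiring_1) \<in> {0, 1}"
  using assms by (induction A rule: infinite_finite_induct) auto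

lemma square_eq_self_iff: "(y::'a::idom) ^ 2 = y \<longleftrightarrow> y \<in> {0, 1}"
proof -
  have "y ^ 2 - y = y * (y - 1)" by (simp add: power2_eq_square algebra_simps)
  then show ?thesis by auto
qed

lemma power_card_UNIV_eq_self:
  fixes x :: "'a::{field,finite}"
  shows "x ^ card (UNIV :: 'a set) = x"
proof (cases "x = 0")
  case False
  have "(\<Prod>y\<in>UNIV-{0}. x * y) = (\<Prod>y\<in>UNIV-{0}. y)"
    by (rule prod.reindex_bij_witness[of _ "\<lambda>y. y / x" "\<lambda>y. x * y"]) (use False in auto)
  then have "x ^ card (UNIV - {0 :: 'a}) * (\<Prod>y\<in>UNIV-{0}. y) = 1 * (\<Prod>y\<in>UNIV-{0::'a}. y)"
    by (simp add: prod.distrib)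
  then have "x ^ (card (UNIV :: 'a set) - 1) = 1"
    by (simp add: card_Diff_singleton)
  moreover obtain q where "card (UNIV :: 'a set) = Suc q"
    using gr0_implies_Suc[OF finite_UNIV_card_ge_0[where 'a='a]] by auto
  ultimately show ?thesis
    by simp
qed (use finite_UNIV_card_ge_0[where 'a='a] in simp)

lemma tr_add:
  assumes "CHAR('a::field) = 2"
  shows "tr k (x + y :: 'a) = tr k x + tr k y"
  unfolding tr_def using assms by (simp add: freshmans_dream' sum.distrib)

lemma tr_sum:
  assumes "CHAR('a::field) = 2"
  shows "tr k (\<Sum>i\<in>A. f i :: 'a) = (\<Sum>i\<in>A. tr k (f i))"
proof -
  have "tr k (\<Sum>i\<in>A. f i) = (\<Sum>j<k. \<Sum>i\<in>A. f i ^ 2 ^ j)"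
    unfolding tr_def using assms by (simp add: freshmans_dream_sum')
  then show ?thesis
    unfolding tr_def by (simp add: sum.swap[of _ "{..<k}"])
qed

lemma tr_in_zero_one:
  assumes "CHAR('a::field) = 2" and "x ^ 2 ^ k = (x::'a)"
  shows "tr k x \<in> {0, 1}"
proof -
  have "(tr k x) ^ 2 = (\<Sum>i<k. x ^ 2 ^ Suc i)"
    unfolding tr_def using assms(1)
    by (simp add: freshmans_dream_sum'[where n=1] mult.commute flip: power_mult)
  also have "\<dots> = tr k x"
    using sum.lessThan_Suc_shift[of "\<lambda>i. x ^ 2 ^ i" k] assms(2) by (simp add: tr_def add.commute)
  finally show ?thesis by (simp add: square_eq_self_iff)
qed

definition neg_one_pow :: "'a::zero \<Rightarrow> int" where
  "neg_one_pow v = (if v = 0 then 1 else -1)"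

lemma abs_neg_one_pow [simp]: "\<bar>neg_one_pow v\<bar> = 1"
  by (simp add: neg_one_pow_def)

lemma neg_one_pow_add:
  assumes "CHAR('a::ring_1) = 2" and "v \<in> {0, 1}" and "w \<in> {0, 1}"
  shows "neg_one_pow (v + w :: 'a) = neg_one_pow v * neg_one_pow w"
  using assms add_self_CHAR_2[OF assms(1), of 1] by (auto simp: neg_one_pow_def)

lemma neg_one_pow_sum:
  assumes "CHAR('a::ring_1) = 2" and "\<forall>i\<in>A. f i \<in> {0, 1}"
  shows "neg_one_pow (\<Sum>i\<in>A. f i :: 'a) = (\<Prod>i\<in>A. neg_one_pow (f i))"
  using assms(2)
proof (induction A rule: infinite_finite_induct)
  case (insert i A)
  then have "f i \<in> {0, 1}" "sum f A \<in> {0, 1}"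
    using sum_in_zero_one[OF assms(1)] by auto
  with insert show ?case
    by (simp add: neg_one_pow_add[OF assms(1)])
qed (simp_all add: neg_one_pow_def)

lemma neg_one_pow_sum_indicator:
  assumes "CHAR('a::ring_1) = 2" and "finite S"
  shows "neg_one_pow (\<Sum>i\<in>S. of_bool (i \<in> T) :: 'a) = (-1) ^ card (S \<inter> T)"
proof -
  have "neg_one_pow (\<Sum>i\<in>S. of_bool (i \<in> T) :: 'a) = (\<Prod>i\<in>S. neg_one_pow (of_bool (i \<in> T) :: 'a))"
    by (rule neg_one_pow_sum[OF assms(1)]) simp
  also have "\<dots> = (\<Prod>i\<in>S. if i \<in> T then -1 else 1)"
    by (intro prod.cong refl) (simp add: neg_one_pow_def)
  also have "\<dots> = (-1) ^ card (S \<inter> T)"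
    using assms(2) by (simp add: prod.If_cases Int_def)
  finally show ?thesis .
qed

lemma sum_neg_one_pow_Pow:
  assumes "CHAR('a::ring_1) = 2" and "finite A" and "\<forall>i\<in>A. z i \<in> {0, 1}"
  shows "(\<Sum>S\<in>Pow A. neg_one_pow (\<Sum>i\<in>S. z i :: 'a)) = (if \<forall>i\<in>A. z i = 0 then 2 ^ card A else 0)"
proof -
  have "(\<Sum>S\<in>Pow A. neg_one_pow (\<Sum>i\<in>S. z i)) = (\<Sum>S\<in>Pow A. (\<Prod>i\<in>S. neg_one_pow (z i)) * (\<Prod>i\<in>A - S. 1))"
    using assms(3) by (intro sum.cong refl) (simp add: neg_one_pow_sum[OF assms(1)] subset_iff)
  also have "\<dots> = (\<Prod>i\<in>A. neg_one_pow (z i) + 1)"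
    by (rule prod_add[OF assms(2), symmetric])
  also have "\<dots> = (if \<forall>i\<in>A. z i = 0 then 2 ^ card A else 0)"
    using assms(2) by (auto simp: neg_one_pow_def)
  finally show ?thesis .
qed

lemma boolean_character_orthogonality:
  assumes char: "CHAR('a::ring_1) = 2" and "finite I" and y01: "\<forall>i\<in>I. y i \<in> {0, 1}"
    and "T \<subseteq> I"
  shows "(\<Sum>S\<in>Pow I. (-1) ^ card (S \<inter> T) * neg_one_pow (\<Sum>i\<in>S. y i :: 'a))
    = (if T = {i \<in> I. y i = 1} then 2 ^ card I else 0)"
proof -
  have z01: "\<forall>i\<in>I. of_bool (i \<in> T) + y i \<in> {0, 1 :: 'a}"
    using y01 by (intro ballI add_in_zero_one[OF char]) simp_all
  have "(\<Sum>S\<in>Pow I. (-1) ^ card (S \<inter> T) * neg_one_pow (\<Sum>i\<in>S. y i))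
      = (\<Sum>S\<in>Pow I. neg_one_pow (\<Sum>i\<in>S. of_bool (i \<in> T) + y i))"
  proof (intro sum.cong refl)
    fix S assume "S \<in> Pow I"
    then have "finite S" and yS: "\<forall>i\<in>S. y i \<in> {0, 1}"
      using y01 \<open>finite I\<close> finite_subset by auto
    have "neg_one_pow (\<Sum>i\<in>S. of_bool (i \<in> T) + y i)
        = neg_one_pow (\<Sum>i\<in>S. of_bool (i \<in> T) :: 'a) * neg_one_pow (\<Sum>i\<in>S. y i)"
      unfolding sum.distrib using yS
      by (intro neg_one_pow_add[OF char] sum_in_zero_one[OF char]) simp_all
    then show "(-1) ^ card (S \<inter> T) * neg_one_pow (\<Sum>i\<in>S. y i)
        = neg_one_pow (\<Sum>i\<in>S. of_bool (i \<in> T) + y i)"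
      by (simp only: neg_one_pow_sum_indicator[OF char \<open>finite S\<close>])
  qed
  moreover have "(\<forall>i\<in>I. of_bool (i \<in> T) + y i = (0::'a)) \<longleftrightarrow> T = {i \<in> I. y i = 1}"
    using \<open>T \<subseteq> I\<close> y01 by (simp only: add_eq_0_iff_eq_CHAR_2[OF char]) auto
  ultimately show ?thesis
    using sum_neg_one_pow_Pow[OF char \<open>finite I\<close> z01] by simp
qed

text \<open>A point of the cube {0,1}^I is encoded by its support T \<subseteq> I.\<close>

lemma boolean_fourier_expansion:
  fixes \<phi> :: "('i \<Rightarrow> 'a::ring_1) \<Rightarrow> int"
  assumes char: "CHAR('a) = 2" and "finite I" and y01: "\<forall>i\<in>I. y i \<in> {0, 1}"
    and \<phi>_local: "\<And>y'. \<forall>i\<in>I. y' i = y i \<Longrightarrow> \<phi> y' = \<phi> y"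
  shows "2 ^ card I * \<phi> y = (\<Sum>S\<in>Pow I. \<Sum>T\<in>Pow I.
    \<phi> (\<lambda>i. of_bool (i \<in> T)) * (-1) ^ card (S \<inter> T) * neg_one_pow (\<Sum>i\<in>S. y i))"
proof -
  define T0 where "T0 = {i \<in> I. y i = 1}"
  have "(\<Sum>S\<in>Pow I. \<Sum>T\<in>Pow I. \<phi> (\<lambda>i. of_bool (i \<in> T)) * (-1) ^ card (S \<inter> T) * neg_one_pow (\<Sum>i\<in>S. y i))
      = (\<Sum>T\<in>Pow I. \<phi> (\<lambda>i. of_bool (i \<in> T)) *
          (\<Sum>S\<in>Pow I. (-1) ^ card (S \<inter> T) * neg_one_pow (\<Sum>i\<in>S. y i)))"
    by (subst sum.swap) (simp add: sum_distrib_left mult.assoc)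
  also have "\<dots> = (\<Sum>T\<in>Pow I. if T = T0 then \<phi> (\<lambda>i. of_bool (i \<in> T)) * 2 ^ card I else 0)"
    unfolding T0_def
    by (intro sum.cong refl) (simp add: boolean_character_orthogonality[OF char \<open>finite I\<close> y01])
  also have "\<dots> = \<phi> (\<lambda>i. of_bool (i \<in> T0)) * 2 ^ card I"
    using \<open>finite I\<close> by (simp add: T0_def)
  also have "\<phi> (\<lambda>i. of_bool (i \<in> T0)) = \<phi> y"
    using y01 by (intro \<phi>_local) (auto simp: T0_def)
  finally show ?thesis by simp
qed

lemma second_deriv_commute: "second_deriv f a b x = second_deriv f b a x"
  by (simp add: second_deriv_def ac_simps)

lemma second_deriv_zero_imp_affine_on_sums:
  fixes f :: "'a::field \<Rightarrow> 'a"
  assumes char: "CHAR('a) = 2" and "finite S"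
    and dd: "\<And>i j x. i \<in> S \<Longrightarrow> j \<in> S \<Longrightarrow> i \<noteq> j \<Longrightarrow> second_deriv f (u i) (u j) x = 0"
  shows "f (a + (\<Sum>j\<in>S. u j)) = f a + (\<Sum>j\<in>S. f (a + u j) + f a)"
  using assms(2,3)
proof (induction S arbitrary: a rule: finite_induct)
  case (insert i S)
  have pair: "f (a + u i + u j) + f (a + u i) = f (a + u j) + f a" if "j \<in> S" for j
  proof -
    have "second_deriv f (u i) (u j) a = 0"
      using insert.prems insert.hyps(2) that by (metis insertCI)
    then have "(f (a + u i + u j) + f (a + u i)) + (f (a + u j) + f a) = 0"
      by (simp add: second_deriv_def ac_simps)
    then show ?thesis
      by (simp add: add_eq_0_iff_eq_CHAR_2[OF char])
  qed
  have "f (a + (\<Sum>j\<in>insert i S. u j)) = f (a + u i + (\<Sum>j\<in>S. u j))"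
    using insert.hyps by (simp add: ac_simps)
  also have "\<dots> = f (a + u i) + (\<Sum>j\<in>S. f (a + u i + u j) + f (a + u i))"
    using insert.prems by (intro insert.IH) auto
  also have "\<dots> = f (a + u i) + (\<Sum>j\<in>S. f (a + u j) + f a)"
    using pair by simp
  also have "\<dots> = f a + (\<Sum>j\<in>insert i S. f (a + u j) + f a)"
    using insert.hyps add_self_CHAR_2[OF char, of "f a"] by (simp add: ac_simps)
  finally show ?case .
qed simp

lemma walsh_eq_sum_neg_one_pow: "walsh n f a = (\<Sum>x\<in>UNIV. neg_one_pow (f x + tr n (a * x)))"
  by (simp add: walsh_def neg_one_pow_def)

lemma dual_in_zero_one: "dual n g b \<in> {0, 1}"
  by (simp add: dual_def)

lemma walsh_bent:
  assumes "bent n g"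
  shows "walsh n g b = 2 ^ (n div 2) * neg_one_pow (dual n g b)"
proof -
  have "\<bar>walsh n g b\<bar> = 2 ^ (n div 2)"
    using assms by (simp add: bent_def)
  then have "walsh n g b = 2 ^ (n div 2) \<or> walsh n g b = - (2 ^ (n div 2))"
    by (auto simp: abs_if split: if_splits)
  then show ?thesis
    by (auto simp: dual_def neg_one_pow_def)
qed

lemma walsh_bent_shift_by_sum:
  fixes g :: "'a::{field,finite} \<Rightarrow> 'a" and u :: "'i \<Rightarrow> 'a"
  assumes char: "CHAR('a) = 2" and "bent n g" and "finite S"
    and dual_dd: "\<And>i j x. i \<in> S \<Longrightarrow> j \<in> S \<Longrightarrow> i \<noteq> j \<Longrightarrow> second_deriv (dual n g) (u i) (u j) x = 0"
  shows "walsh n g (a + (\<Sum>j\<in>S. u j)) = 2 ^ (n div 2)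
    * (neg_one_pow (dual n g a) * neg_one_pow (\<Sum>i\<in>S. dual n g (a + u i) + dual n g a))"
proof -
  have affine: "dual n g (a + (\<Sum>j\<in>S. u j)) = dual n g a + (\<Sum>i\<in>S. dual n g (a + u i) + dual n g a)"
    by (rule second_deriv_zero_imp_affine_on_sums[OF char \<open>finite S\<close> dual_dd])
  have "(\<Sum>i\<in>S. dual n g (a + u i) + dual n g a) \<in> {0, 1}"
    by (intro sum_in_zero_one[OF char] ballI add_in_zero_one[OF char] dual_in_zero_one)
  then show ?thesis
    unfolding walsh_bent[OF \<open>bent n g\<close>] affine
    by (simp only: neg_one_pow_add[OF char dual_in_zero_one])
qed

context
  fixes n :: nat
  assumes card: "card (UNIV :: 'a::{field,finite} set) = 2 ^ n" and char: "CHAR('a) = 2"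
begin

lemma tr_in_zero_one_card: "tr n (x :: 'a) \<in> {0, 1}"
  using tr_in_zero_one[OF char] power_card_UNIV_eq_self[of x] card by simp

lemma neg_one_pow_tr_mult:
  assumes "v \<in> {0, 1}"
  shows "neg_one_pow (v + tr n (a * x)) * neg_one_pow (tr n (b * x :: 'a))
    = neg_one_pow (v + tr n ((a + b) * x))"
proof -
  have "neg_one_pow (v + tr n ((a + b) * x)) = neg_one_pow ((v + tr n (a * x)) + tr n (b * x))"
    by (simp add: distrib_right tr_add[OF char] add.assoc)
  also have "\<dots> = neg_one_pow (v + tr n (a * x)) * neg_one_pow (tr n (b * x))"
    by (intro neg_one_pow_add[OF char] add_in_zero_one[OF char] assms tr_in_zero_one_card)
  finally show ?thesis by simp
qed

lemma neg_one_pow_boolean_of_traces_expansion: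
  fixes u :: "'i \<Rightarrow> 'a" and F :: "('i \<Rightarrow> 'a) \<Rightarrow> 'a"
  assumes "finite I" and F_local: "\<And>y y'. \<forall>i\<in>I. y' i = y i \<Longrightarrow> F y' = F y"
  shows "2 ^ card I * neg_one_pow (F (\<lambda>i. tr n (u i * x)))
    = (\<Sum>S\<in>Pow I. \<Sum>T\<in>Pow I. neg_one_pow (F (\<lambda>i. of_bool (i \<in> T))) * (-1) ^ card (S \<inter> T)
        * neg_one_pow (tr n ((\<Sum>j\<in>S. u j) * x)))"
proof -
  have "\<forall>i\<in>I. tr n (u i * x) \<in> {0, 1}"
    using tr_in_zero_one_card by blast
  then have "2 ^ card I * neg_one_pow (F (\<lambda>i. tr n (u i * x)))
      = (\<Sum>S\<in>Pow I. \<Sum>T\<in>Pow I. neg_one_pow (F (\<lambda>i. of_bool (i \<in> T))) * (-1) ^ card (S \<inter> T)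
          * neg_one_pow (\<Sum>j\<in>S. tr n (u j * x)))"
    by (intro boolean_fourier_expansion[where \<phi> = "\<lambda>y. neg_one_pow (F y)", OF char \<open>finite I\<close>]
        arg_cong[where f = neg_one_pow] F_local)
  then show ?thesis
    by (simp add: tr_sum[OF char] sum_distrib_right)
qed

lemma walsh_add_boolean_of_traces_expansion:
  fixes g :: "'a \<Rightarrow> 'a" and u :: "'i \<Rightarrow> 'a" and F :: "('i \<Rightarrow> 'a) \<Rightarrow> 'a"
  assumes "bool_fun g" and "finite I"
    and F01: "\<And>y. \<forall>i\<in>I. y i \<in> {0, 1} \<Longrightarrow> F y \<in> {0, 1}"
    and F_local: "\<And>y y'. \<forall>i\<in>I. y' i = y i \<Longrightarrow> F y' = F y"
  shows "2 ^ card I * walsh n (\<lambda>x. g x + F (\<lambda>i. tr n (u i * x))) a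
    = (\<Sum>S\<in>Pow I. \<Sum>T\<in>Pow I. neg_one_pow (F (\<lambda>i. of_bool (i \<in> T))) * (-1) ^ card (S \<inter> T)
        * walsh n g (a + (\<Sum>j\<in>S. u j)))"
proof -
  let ?L = "\<lambda>x i. tr n (u i * x)"
  define K where "K S T = neg_one_pow (F (\<lambda>i. of_bool (i \<in> T))) * (-1) ^ card (S \<inter> T)"
    for S T :: "'i set"
  have g01: "g x \<in> {0, 1}" for x
    using \<open>bool_fun g\<close> by (simp add: bool_fun_def)
  have L01: "\<forall>i\<in>I. ?L x i \<in> {0, 1}" for x
    using tr_in_zero_one_card by blast
  have fourier: "2 ^ card I * neg_one_pow (F (?L x))
      = (\<Sum>S\<in>Pow I. \<Sum>T\<in>Pow I. K S T * neg_one_pow (tr n ((\<Sum>j\<in>S. u j) * x)))" for x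
    unfolding K_def by (rule neg_one_pow_boolean_of_traces_expansion[OF \<open>finite I\<close> F_local])
  have split: "neg_one_pow (g x + F (?L x) + tr n (a * x))
      = neg_one_pow (g x + tr n (a * x)) * neg_one_pow (F (?L x))" for x
  proof -
    have "g x + F (?L x) + tr n (a * x) = (g x + tr n (a * x)) + F (?L x)"
      by (simp add: ac_simps)
    then show ?thesis
      by (simp only: neg_one_pow_add[OF char add_in_zero_one[OF char g01 tr_in_zero_one_card] F01[OF L01]])
  qed
  have shift: "neg_one_pow (g x + tr n (a * x)) * (K S T * neg_one_pow (tr n (b * x)))
      = K S T * neg_one_pow (g x + tr n ((a + b) * x))" for x S T b
    by (metis mult.left_commute neg_one_pow_tr_mult[OF g01[of x]])
  have "2 ^ card I * walsh n (\<lambda>x. g x + F (?L x)) a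
      = (\<Sum>x\<in>UNIV. neg_one_pow (g x + tr n (a * x)) * (2 ^ card I * neg_one_pow (F (?L x))))"
    by (simp add: walsh_eq_sum_neg_one_pow split sum_distrib_left mult.left_commute)
  also have "\<dots> = (\<Sum>x\<in>UNIV. \<Sum>S\<in>Pow I. \<Sum>T\<in>Pow I.
      K S T * neg_one_pow (g x + tr n ((a + (\<Sum>j\<in>S. u j)) * x)))"
    by (simp add: fourier sum_distrib_left shift)
  also have "\<dots> = (\<Sum>S\<in>Pow I. \<Sum>T\<in>Pow I. K S T * walsh n g (a + (\<Sum>j\<in>S. u j)))"
    by (simp add: walsh_eq_sum_neg_one_pow sum_distrib_left sum.swap[of _ UNIV "Pow I"])
  finally show ?thesis
    by (simp add: K_def)
qed

lemma walsh_add_boolean_of_traces: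
  fixes g :: "'a \<Rightarrow> 'a" and u :: "'i \<Rightarrow> 'a" and F :: "('i \<Rightarrow> 'a) \<Rightarrow> 'a"
  assumes "bent n g" and "finite I"
    and F01: "\<And>y. \<forall>i\<in>I. y i \<in> {0, 1} \<Longrightarrow> F y \<in> {0, 1}"
    and F_local: "\<And>y y'. \<forall>i\<in>I. y' i = y i \<Longrightarrow> F y' = F y"
    and dual_dd: "\<And>i j x. i \<in> I \<Longrightarrow> j \<in> I \<Longrightarrow> i \<noteq> j \<Longrightarrow> second_deriv (dual n g) (u i) (u j) x = 0"
  shows "walsh n (\<lambda>x. g x + F (\<lambda>i. tr n (u i * x))) a
    = 2 ^ (n div 2) * neg_one_pow (dual n g a + F (\<lambda>i. dual n g (a + u i) + dual n g a))"
proof -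
  define \<delta> where "\<delta> = (\<lambda>i. dual n g (a + u i) + dual n g a)"
  have \<delta>01: "\<forall>i\<in>I. \<delta> i \<in> {0, 1}"
    unfolding \<delta>_def by (intro ballI add_in_zero_one[OF char] dual_in_zero_one)
  have walsh_shift: "walsh n g (a + (\<Sum>j\<in>S. u j))
      = 2 ^ (n div 2) * (neg_one_pow (dual n g a) * neg_one_pow (\<Sum>i\<in>S. \<delta> i))" if "S \<in> Pow I" for S
    using that \<open>finite I\<close> unfolding \<delta>_def
    by (intro walsh_bent_shift_by_sum[OF char \<open>bent n g\<close>]) (auto intro: dual_dd finite_subset)
  have fourier_\<delta>: "2 ^ card I * neg_one_pow (F \<delta>) = (\<Sum>S\<in>Pow I. \<Sum>T\<in>Pow I.
      neg_one_pow (F (\<lambda>i. of_bool (i \<in> T))) * (-1) ^ card (S \<inter> T) * neg_one_pow (\<Sum>i\<in>S. \<delta> i))"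
    by (intro boolean_fourier_expansion[where \<phi> = "\<lambda>y. neg_one_pow (F y)", OF char \<open>finite I\<close> \<delta>01]
        arg_cong[where f = neg_one_pow] F_local)
  have "2 ^ card I * walsh n (\<lambda>x. g x + F (\<lambda>i. tr n (u i * x))) a
      = (\<Sum>S\<in>Pow I. \<Sum>T\<in>Pow I. neg_one_pow (F (\<lambda>i. of_bool (i \<in> T))) * (-1) ^ card (S \<inter> T)
          * walsh n g (a + (\<Sum>j\<in>S. u j)))"
    using \<open>bent n g\<close> \<open>finite I\<close> F01 F_local unfolding bent_def
    by (intro walsh_add_boolean_of_traces_expansion) auto
  also have "\<dots> = (\<Sum>S\<in>Pow I. \<Sum>T\<in>Pow I. 2 ^ (n div 2) * neg_one_pow (dual n g a) *
      (neg_one_pow (F (\<lambda>i. of_bool (i \<in> T))) * (-1) ^ card (S \<inter> T) * neg_one_pow (\<Sum>i\<in>S. \<delta> i)))"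
    by (intro sum.cong refl) (simp add: walsh_shift)
  also have "\<dots> = 2 ^ (n div 2) * neg_one_pow (dual n g a) * (\<Sum>S\<in>Pow I. \<Sum>T\<in>Pow I.
      neg_one_pow (F (\<lambda>i. of_bool (i \<in> T))) * (-1) ^ card (S \<inter> T) * neg_one_pow (\<Sum>i\<in>S. \<delta> i))"
    by (simp add: sum_distrib_left)
  also have "\<dots> = 2 ^ (n div 2) * neg_one_pow (dual n g a) * (2 ^ card I * neg_one_pow (F \<delta>))"
    using fourier_\<delta> by simp
  finally show ?thesis
    using neg_one_pow_add[OF char dual_in_zero_one F01[OF \<delta>01]] by (simp add: \<delta>_def)
qed

lemma bent_add_boolean_of_traces:
  fixes g :: "'a \<Rightarrow> 'a" and u :: "'i \<Rightarrow> 'a" and F :: "('i \<Rightarrow> 'a) \<Rightarrow> 'a"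
  assumes "bent n g" and "finite I"
    and F01: "\<And>y. \<forall>i\<in>I. y i \<in> {0, 1} \<Longrightarrow> F y \<in> {0, 1}"
    and F_local: "\<And>y y'. \<forall>i\<in>I. y' i = y i \<Longrightarrow> F y' = F y"
    and dual_dd: "\<And>i j x. i \<in> I \<Longrightarrow> j \<in> I \<Longrightarrow> i \<noteq> j \<Longrightarrow> second_deriv (dual n g) (u i) (u j) x = 0"
  shows "bent n (\<lambda>x. g x + F (\<lambda>i. tr n (u i * x)))"
  unfolding bent_def bool_fun_def
proof (intro conjI allI)
  show "g x + F (\<lambda>i. tr n (u i * x)) \<in> {0, 1}" for x
  proof -
    have "g x \<in> {0, 1}"
      using \<open>bent n g\<close> by (simp add: bent_def bool_fun_def)
    then show ?thesis
      by (intro add_in_zero_one[OF char] F01 ballI tr_in_zero_one_card)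
  qed
  show "\<bar>walsh n (\<lambda>x. g x + F (\<lambda>i. tr n (u i * x))) a\<bar> = 2 ^ (n div 2)" for a
  proof -
    have "walsh n (\<lambda>x. g x + F (\<lambda>i. tr n (u i * x))) a
        = 2 ^ (n div 2) * neg_one_pow (dual n g a + F (\<lambda>i. dual n g (a + u i) + dual n g a))"
      by (rule walsh_add_boolean_of_traces[OF assms])
    then show ?thesis
      by (simp add: abs_mult)
  qed
qed

end

lemma eval_reduced_cong:
  "\<forall>i\<in>{1..\<tau>}. y' i = y i \<Longrightarrow> eval_reduced \<tau> c y' = eval_reduced \<tau> c y"
  unfolding eval_reduced_def by (intro sum.cong refl arg_cong2[where f = "(*)"] prod.cong) auto

lemma eval_reduced_in_zero_one:
  assumes "CHAR('a::field) = 2" and "reduced_poly \<tau> c" and "\<forall>i\<in>{1..\<tau>}. y i \<in> {0, 1}"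
  shows "eval_reduced \<tau> c (y :: nat \<Rightarrow> 'a) \<in> {0, 1}"
  unfolding eval_reduced_def
proof (intro sum_in_zero_one[OF assms(1)] ballI)
  fix I assume "I \<in> Pow {1..\<tau>}"
  then have "(\<Prod>i\<in>I. y i) \<in> {0, 1}"
    using assms(3) by (intro prod_in_zero_one) auto
  moreover have "c I \<in> {0, 1}"
    using assms(2) by (simp add: reduced_poly_def)
  ultimately show "c I * (\<Prod>i\<in>I. y i) \<in> {0, 1}"
    by auto
qed

lemma tr_mult_add_zero_one:
  assumes "CHAR('a::field) = 2" and "e \<in> {0, 1}"
  shows "tr m (l * (y + e)) = tr m (l * y) + e * tr m (l :: 'a)"
proof -
  have "tr m (l * e) = e * tr m l"
    using assms(2) by (auto simp: tr_def power_0_left)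
  then show ?thesis
    by (simp add: distrib_left tr_add[OF assms(1)])
qed

lemma vectorial_bent_add_boolean:
  fixes G e :: "'a::{field,finite} \<Rightarrow> 'a"
  assumes char: "CHAR('a) = 2" and G_vb: "vectorial_bent n m G" and e01: "\<And>x. e x \<in> {0, 1}"
    and bent_if_tr_1: "\<And>l. l \<in> subfield2 m - {0} \<Longrightarrow> tr m l = 1 \<Longrightarrow>
      bent n (\<lambda>x. component m G l x + e x)"
  shows "vectorial_bent n m (\<lambda>x. G x + e x)"
  unfolding vectorial_bent_def
proof (intro conjI allI ballI)
  fix x
  have "e x ^ 2 ^ m = e x"
    using e01[of x] by auto
  then show "G x + e x \<in> subfield2 m"
    using G_vb char by (simp add: vectorial_bent_def subfield2_def freshmans_dream')
next
  fix l :: 'a assume l: "l \<in> subfield2 m - {0}"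
  have "tr m l \<in> {0, 1}"
    using l by (intro tr_in_zero_one[OF char]) (simp add: subfield2_def)
  moreover have "component m (\<lambda>x. G x + e x) l = (\<lambda>x. component m G l x + e x * tr m l)"
    by (simp add: fun_eq_iff component_def tr_mult_add_zero_one[OF char e01])
  ultimately show "bent n (component m (\<lambda>x. G x + e x) l)"
    using G_vb l bent_if_tr_1[OF l] by (auto simp: vectorial_bent_def)
qed

theorem corollary3:
  fixes n m k \<tau> :: nat
    and u :: "nat \<Rightarrow> 'a::{field,finite}"
    and c :: "nat set \<Rightarrow> 'a"
    and G :: "'a \<Rightarrow> 'a"
  assumes card: "card (UNIV :: 'a set) = 2 ^ n"
    and char: "CHAR('a) = 2"
    and n_def: "n = 2 * k" and n_pos: "0 < n"
    and m_pos: "0 < m" and m_dvd: "m dvd n"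
    and tau: "1 \<le> \<tau>" "\<tau> \<le> k"
    and u_distinct: "inj_on u {1..\<tau>}"
    and F_red: "reduced_poly \<tau> c"
    and G_vb: "vectorial_bent n m G"
    and G_dual: "\<forall>l\<in>subfield2 m - {0}. tr m l = 1 \<longrightarrow>
        (\<forall>i j. 1 \<le> i \<and> i < j \<and> j \<le> \<tau> \<longrightarrow>
           (\<forall>x. second_deriv (dual n (component m G l)) (u i) (u j) x = 0))"
  shows "vectorial_bent n m (\<lambda>x. G x + eval_reduced \<tau> c (\<lambda>i. tr n (u i * x)))"
proof (rule vectorial_bent_add_boolean[OF char G_vb])
  show "eval_reduced \<tau> c (\<lambda>i. tr n (u i * x)) \<in> {0, 1}" for x
    by (intro eval_reduced_in_zero_one[OF char F_red] ballI tr_in_zero_one_card[OF card char])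
next
  fix l :: 'a assume l: "l \<in> subfield2 m - {0}" "tr m l = 1"
  have "second_deriv (dual n (component m G l)) (u i) (u j) x = 0"
    if "i \<in> {1..\<tau>}" "j \<in> {1..\<tau>}" "i \<noteq> j" for i j x
  proof -
    have "second_deriv (dual n (component m G l)) (u (min i j)) (u (max i j)) x = 0"
      using G_dual l that by auto
    then show ?thesis
      using second_deriv_commute by (metis max_def min_def)
  qed
  then show "bent n (\<lambda>x. component m G l x + eval_reduced \<tau> c (\<lambda>i. tr n (u i * x)))"
    using G_vb l F_red
    by (intro bent_add_boolean_of_traces[OF card char, where I = "{1..\<tau>}" and F = "eval_reduced \<tau> c"]
        eval_reduced_in_zero_one[OF char] eval_reduced_cong) (auto simp: vectorial_bent_def)
qed

end
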